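(* Let $\mathcal{O}$ be the observation space consisting of all real $2\times n$ matrices ($n\ge 1$ arbitrary) whose columns are unit vectors in $\mathbb{R}^2$, and let $\mathcal{A}=\{(\hat u,\sigma): \hat u\in\mathbb{R}^2,\ \|\hat u\|=1,\ 0\le\sigma\le 1\}$ be the action space. For $\theta\in\mathbb{R}$ let $R(\theta)\in SO(2)$ denote rotation by angle $\theta$, and let a rotation $R\in SO(2)$ act on $O\in\mathcal{O}$ by $O\mapsto RO$ (rotating every column) and on an action $a=(\hat u,\sigma)\in\mathcal{A}$ by $Ra:=(R\hat u,\sigma)$. For $O\in\mathcal{O}$ with $n$ columns such that $O\mathbf{1}_n\neq 0$ (where $\mathbf{1}_n$ is the all-ones vector of length $n$), define $\bar u(O)=\frac{O\mathbf{1}_n}{\|O\mathbf{1}_n\|}$ and let $\theta^*(O)$ be the angle of $\bar u(O)$ measured from the $x$-axis, i.e. the angle with $\bar u(O)=(\cos\theta^*(O),\sin\theta^*(O))^T$ (determined modulo $2\pi$). Define $$T_{\mathrm{pre}}(O)=R(\theta^*(O))^T O,\qquad T_{\mathrm{post}}^{O}(a)=R(\theta^*(O))\,a \quad (a\in\mathcal{A}).$$ Then for any function $m:\mathcal{O}\to\mathcal{A}$, the map $F(O):=T_{\mathrm{post}}^{O}\big(m(T_{\mathrm{pre}}(O))\big)$ is equivariant with respect to $SO(2)$: for every $R\in SO(2)$ and every $O\in\mathcal{O}$ with $O\mathbf{1}_n\neq 0$, one has $F(RO)=R\,F(O)$.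
   Context: In the paper, an observation of an agent is the collection of unit vectors (bearings) pointing from the agent to each of its visible neighbours, written as a $2\times n$ matrix whose columns are these unit vectors. An action is a movement direction (unit vector) together with a step size in $[0,1]$. A function $m$ from observations to actions is called equivariant with respect to rotations if $m(RO)=R\,m(O)$ for all observations $O$ and all $R\in SO(2)$, where rotations act on actions by rotating the direction component only. *)

theory Defs
  imports "HOL-Analysis.Analysis"
begin

text \<open>An observation is a 2 x n matrix whose columns are unit vectors; we represent it
  by the list of its columns (n = length of the list, n >= 1).\<close>
type_synonym obs = "(real^2) list"
type_synonym action = "(real^2) \<times> real"

definition is_obs :: "obs \<Rightarrow> bool" where
  "is_obs Ob \<longleftrightarrow> Ob \<noteq> [] \<and> (\<forall>c\<in>set Ob. norm c = 1)"

definition is_action :: "action \<Rightarrow> bool" where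
  "is_action a \<longleftrightarrow> norm (fst a) = 1 \<and> 0 \<le> snd a \<and> snd a \<le> 1"

definition rot :: "real \<Rightarrow> real^2^2" where
  "rot \<theta> = vector [vector [cos \<theta>, - sin \<theta>], vector [sin \<theta>, cos \<theta>]]"

definition SO2 :: "(real^2^2) set" where
  "SO2 = {R. orthogonal_matrix R \<and> det R = 1}"

definition rot_obs :: "real^2^2 \<Rightarrow> obs \<Rightarrow> obs" where
  "rot_obs R Ob = map (\<lambda>c. R *v c) Ob"

definition rot_act :: "real^2^2 \<Rightarrow> action \<Rightarrow> action" where
  "rot_act R a = (R *v fst a, snd a)"

text \<open>Ob 1_n is the sum of the columns.\<close>
definition ubar :: "obs \<Rightarrow> real^2" where
  "ubar Ob = sum_list Ob /\<^sub>R norm (sum_list Ob)"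

definition theta_star :: "obs \<Rightarrow> real" where
  "theta_star Ob = (SOME \<theta>. ubar Ob = vector [cos \<theta>, sin \<theta>])"

definition T_pre :: "obs \<Rightarrow> obs" where
  "T_pre Ob = rot_obs (transpose (rot (theta_star Ob))) Ob"

definition T_post :: "obs \<Rightarrow> action \<Rightarrow> action" where
  "T_post Ob a = rot_act (rot (theta_star Ob)) a"

definition F :: "(obs \<Rightarrow> action) \<Rightarrow> obs \<Rightarrow> action" where
  "F m Ob = T_post Ob (m (T_pre Ob))"

end

theory Submission
  imports Defs
begin

text \<open>The angle \<theta>*(O) matters only through \<open>R(\<theta>*(O))\<close>, the rotation whose first
  column is \<open>ubar O\<close>. Rotating \<open>O\<close> by \<open>R\<close> rotates \<open>ubar O\<close> by \<open>R\<close>, and since every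
  rotation is determined by its first column, \<open>R(\<theta>*(RO)) = R R(\<theta>*(O))\<close>. Hence the
  canonicalised observation \<open>T_pre (RO) = T_pre O\<close> is unchanged and the post-rotation
  picks up exactly one factor \<open>R\<close>.\<close>

definition rot_vec :: "real^2 \<Rightarrow> real^2^2" where
  "rot_vec u = vector [vector [u$1, - u$2], vector [u$2, u$1]]"

lemma norm_vec2: "norm (x::real^2) = sqrt (x$1^2 + x$2^2)"
  by (simp add: norm_vec_def L2_set_def sum_2)

lemma unit_vec2_cos_sin:
  assumes "norm (u::real^2) = 1"
  obtains t where "u = vector [cos t, sin t]"
proof -
  have "u$1^2 + u$2^2 = 1" using assms by (simp add: norm_vec2)
  then obtain t where "u$1 = cos t" "u$2 = sin t" using sincos_total_2pi_le by blast
  then have "u = vector [cos t, sin t]" by (simp add: vec_eq_iff forall_2)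
  then show thesis by (rule that)
qed

lemma rot_theta_star:
  assumes "sum_list Ob \<noteq> 0"
  shows "rot (theta_star Ob) = rot_vec (ubar Ob)"
proof -
  have "norm (ubar Ob) = 1" using assms by (simp add: ubar_def)
  then have "\<exists>t. ubar Ob = vector [cos t, sin t]" by (metis unit_vec2_cos_sin)
  then have "ubar Ob = vector [cos (theta_star Ob), sin (theta_star Ob)]"
    unfolding theta_star_def by (rule someI_ex)
  then show ?thesis by (simp add: rot_def rot_vec_def)
qed

lemma SO2_eq_rot_vec:
  assumes "R \<in> SO2"
  shows "R = rot_vec (column 1 R)"
proof -
  have RR: "transpose R ** R = mat 1" and det: "det R = 1"
    using assms by (auto simp: SO2_def orthogonal_matrix)
  have col: "R$1$1 * R$1$1 + R$2$1 * R$2$1 = 1"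
    using arg_cong[OF RR, of "\<lambda>M. M$1$1"]
    by (simp add: matrix_matrix_mult_def sum_2 transpose_def mat_def)
  have orth: "R$1$1 * R$1$2 + R$2$1 * R$2$2 = 0"
    using arg_cong[OF RR, of "\<lambda>M. M$1$2"]
    by (simp add: matrix_matrix_mult_def sum_2 transpose_def mat_def)
  have "R$1$1 * R$2$2 - R$1$2 * R$2$1 = 1" using det by (simp add: det_2)
  then have "R$1$2 = - R$2$1 \<and> R$2$2 = R$1$1"
    using col orth by algebra
  then show ?thesis
    by (simp add: vec_eq_iff forall_2 rot_vec_def column_def)
qed

lemma rot_vec_mult: "rot_vec (rot_vec v *v w) = rot_vec v ** rot_vec w"
  by (simp add: vec_eq_iff forall_2 rot_vec_def matrix_vector_mult_def
      matrix_matrix_mult_def sum_2 algebra_simps)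

lemma rot_vec_SO2_mult: "R \<in> SO2 \<Longrightarrow> rot_vec (R *v u) = R ** rot_vec u"
  by (metis SO2_eq_rot_vec rot_vec_mult)

lemma SO2_norm: "R \<in> SO2 \<Longrightarrow> norm (R *v x) = norm x"
  by (simp add: SO2_def orthogonal_transformation_matrix orthogonal_transformation_norm)

lemma sum_list_rot_obs: "sum_list (rot_obs R Ob) = R *v sum_list Ob"
  by (induction Ob) (auto simp: rot_obs_def matrix_vector_right_distrib)

lemma ubar_rot_obs:
  assumes "R \<in> SO2"
  shows "ubar (rot_obs R Ob) = R *v ubar Ob"
  using assms by (simp add: ubar_def sum_list_rot_obs SO2_norm matrix_vector_mult_scaleR)

lemma rot_theta_star_rot_obs:
  assumes "R \<in> SO2" and "sum_list Ob \<noteq> 0"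
  shows "rot (theta_star (rot_obs R Ob)) = R ** rot (theta_star Ob)"
proof -
  have "sum_list (rot_obs R Ob) \<noteq> 0"
    using assms by (metis SO2_norm norm_eq_zero sum_list_rot_obs)
  then show ?thesis
    using assms by (simp add: rot_theta_star ubar_rot_obs rot_vec_SO2_mult)
qed

lemma T_pre_rot_obs:
  assumes "R \<in> SO2" and "sum_list Ob \<noteq> 0"
  shows "T_pre (rot_obs R Ob) = T_pre Ob"
proof -
  have RR: "transpose R ** R = mat 1"
    using assms(1) by (simp add: SO2_def orthogonal_matrix)
  have "transpose (R ** U) *v (R *v c) = transpose U *v c" for U :: "real^2^2" and c
    by (simp add: matrix_transpose_mul matrix_vector_mul_assoc RR flip: matrix_mul_assoc)
  then show ?thesis
    unfolding T_pre_def rot_theta_star_rot_obs[OF assms]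
    by (simp del: vector_transpose_matrix add: rot_obs_def)
qed

theorem F_rot_obs:
  assumes "R \<in> SO2" and "sum_list Ob \<noteq> 0"
  shows "F m (rot_obs R Ob) = rot_act R (F m Ob)"
  using assms by (simp add: F_def T_post_def T_pre_rot_obs rot_theta_star_rot_obs
      rot_act_def matrix_vector_mul_assoc)

theorem lemma1:
  fixes m :: "obs \<Rightarrow> action" and R :: "real^2^2" and Ob :: obs
  assumes "\<forall>Ob'. is_obs Ob' \<longrightarrow> is_action (m Ob')"
    and "R \<in> SO2"
    and "is_obs Ob"
    and "sum_list Ob \<noteq> 0"
  shows "F m (rot_obs R Ob) = rot_act R (F m Ob)"
  using assms(2,4) by (rule F_rot_obs)

end
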